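(* Let $f:\mathcal D\to\{0,1\}$ with $\mathcal D\subseteq X\times Y$ be a (possibly partial) Boolean function. (1) If there is a $(d,\delta_0,\delta_1)$-threshold embedding of $f$ with $\delta_0<\delta_1$, then there is a $(d^2+1)$-dimensional realization of $f$ with margin $\gamma=(\delta_1-\delta_0)/(2+\delta_1+\delta_0)$. (2) Conversely, if there is a $d$-dimensional realization of $f$ with margin $\gamma>0$, then there is a $(d+1,\delta_0,\delta_1)$-threshold embedding of $f$ with $\delta_0=(1-\gamma)^2/4$ and $\delta_1=(1+\gamma)^2/4$.
   Context: Consider an assignment of unit vectors $\alpha_x\in\mathbb R^d$ for $x\in X$ and $\beta_y\in\mathbb R^d$ for $y\in Y$. It is a $(d,\delta_0,\delta_1)$-threshold embedding of $f$ if $|\langle\alpha_x,\beta_y\rangle|^2\le\delta_0$ for all $(x,y)\in f^{-1}(0)$ and $|\langle\alpha_x,\beta_y\rangle|^2\ge\delta_1$ for all $(x,y)\in f^{-1}(1)$. It is a $d$-dimensional realization of $f$ with margin $\gamma>0$ if $\langle\alpha_x,\beta_y\rangle\ge\gamma$ for all $(x,y)\in f^{-1}(0)$ and $\langle\alpha_x,\beta_y\rangle\le-\gamma$ for all $(x,y)\in f^{-1}(1)$. *)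

theory Defs
  imports Complex_Main
begin

text \<open>Vectors in R^d are represented as functions nat => real, of which only the
  coordinates 0..d-1 matter.\<close>

definition inner_d :: "nat \<Rightarrow> (nat \<Rightarrow> real) \<Rightarrow> (nat \<Rightarrow> real) \<Rightarrow> real" where
  "inner_d d u v = (\<Sum>i<d. u i * v i)"

definition unit_d :: "nat \<Rightarrow> (nat \<Rightarrow> real) \<Rightarrow> bool" where
  "unit_d d u \<longleftrightarrow> inner_d d u u = 1"

text \<open>A partial Boolean function on X x Y: f x y = None means (x,y) is outside the
  domain D; Some False encodes value 0 and Some True encodes value 1.\<close>

definition partial_bool_fun :: "'x set \<Rightarrow> 'y set \<Rightarrow> ('x \<Rightarrow> 'y \<Rightarrow> bool option) \<Rightarrow> bool" where
  "partial_bool_fun X Y f \<longleftrightarrow> (\<forall>x y. f x y \<noteq> None \<longrightarrow> x \<in> X \<and> y \<in> Y)"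

definition threshold_embedding ::
  "'x set \<Rightarrow> 'y set \<Rightarrow> ('x \<Rightarrow> 'y \<Rightarrow> bool option) \<Rightarrow> nat \<Rightarrow> real \<Rightarrow> real
     \<Rightarrow> ('x \<Rightarrow> nat \<Rightarrow> real) \<Rightarrow> ('y \<Rightarrow> nat \<Rightarrow> real) \<Rightarrow> bool" where
  "threshold_embedding X Y f d \<delta>0 \<delta>1 \<alpha> \<beta> \<longleftrightarrow>
     (\<forall>x\<in>X. unit_d d (\<alpha> x)) \<and> (\<forall>y\<in>Y. unit_d d (\<beta> y)) \<and>
     (\<forall>x\<in>X. \<forall>y\<in>Y. f x y = Some False \<longrightarrow> \<bar>inner_d d (\<alpha> x) (\<beta> y)\<bar>^2 \<le> \<delta>0) \<and>
     (\<forall>x\<in>X. \<forall>y\<in>Y. f x y = Some True \<longrightarrow> \<bar>inner_d d (\<alpha> x) (\<beta> y)\<bar>^2 \<ge> \<delta>1)"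

definition realization ::
  "'x set \<Rightarrow> 'y set \<Rightarrow> ('x \<Rightarrow> 'y \<Rightarrow> bool option) \<Rightarrow> nat \<Rightarrow> real
     \<Rightarrow> ('x \<Rightarrow> nat \<Rightarrow> real) \<Rightarrow> ('y \<Rightarrow> nat \<Rightarrow> real) \<Rightarrow> bool" where
  "realization X Y f d \<gamma> \<alpha> \<beta> \<longleftrightarrow>
     \<gamma> > 0 \<and>
     (\<forall>x\<in>X. unit_d d (\<alpha> x)) \<and> (\<forall>y\<in>Y. unit_d d (\<beta> y)) \<and>
     (\<forall>x\<in>X. \<forall>y\<in>Y. f x y = Some False \<longrightarrow> inner_d d (\<alpha> x) (\<beta> y) \<ge> \<gamma>) \<and>
     (\<forall>x\<in>X. \<forall>y\<in>Y. f x y = Some True \<longrightarrow> inner_d d (\<alpha> x) (\<beta> y) \<le> - \<gamma>)"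

end

theory Submission
  imports Defs
begin

text \<open>
  (1) Let \<open>m\<close> be the midpoint of \<open>\<delta>0\<close> and \<open>\<delta>1\<close>. The maps
  \<open>u \<mapsto> (a u\<otimes>u, b)\<close> and \<open>v \<mapsto> (-a v\<otimes>v, b)\<close> with \<open>a\<^sup>2 = 1/(1+m)\<close>, \<open>b\<^sup>2 = m/(1+m)\<close>
  send unit vectors to unit vectors and turn \<open>\<langle>u,v\<rangle>\<^sup>2\<close> into the affine expression
  \<open>(m - \<langle>u,v\<rangle>\<^sup>2)/(1+m)\<close>, which is at least \<open>(m - \<delta>0)/(1+m) = \<gamma>\<close> on zeros of \<open>f\<close>
  and at most \<open>(m - \<delta>1)/(1+m) = -\<gamma>\<close> on ones.

  (2) The maps \<open>u \<mapsto> (u, 1)/\<surd>2\<close> and \<open>v \<mapsto> (-v, 1)/\<surd>2\<close> turn \<open>\<langle>u,v\<rangle>\<close> into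
  \<open>(1 - \<langle>u,v\<rangle>)/2\<close>. On zeros of \<open>f\<close> this lies in \<open>[0, (1-\<gamma>)/2]\<close>, the lower bound
  because \<open>\<langle>u,v\<rangle> \<le> 1\<close> for unit vectors; on ones it is at least \<open>(1+\<gamma>)/2\<close>.
\<close>

lemma sum_lessThan_mult_div_mod:
  fixes g :: "nat \<Rightarrow> nat \<Rightarrow> 'a::comm_monoid_add"
  shows "(\<Sum>i<n * d. g (i div d) (i mod d)) = (\<Sum>j<n. \<Sum>k<d. g j k)"
proof (cases "d = 0")
  case False
  have "(\<Sum>i<n * d. g (i div d) (i mod d)) = (\<Sum>(j, k)\<in>{..<n} \<times> {..<d}. g j k)"
    by (rule sum.reindex_bij_witness[where i = "\<lambda>(j, k). j * d + k" and j = "\<lambda>i. (i div d, i mod d)"])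
      (use False in \<open>auto simp: less_mult_imp_div_less dest: mult_le_mono1[of "Suc _" n d, OF Suc_leI]\<close>)
  then show ?thesis
    by (simp add: sum.cartesian_product)
qed simp

definition tensor_square_vec :: "nat \<Rightarrow> real \<Rightarrow> real \<Rightarrow> (nat \<Rightarrow> real) \<Rightarrow> nat \<Rightarrow> real" where
  "tensor_square_vec d p c u = (\<lambda>i. if i < d * d then p * u (i div d) * u (i mod d) else c)"

definition extend_vec :: "nat \<Rightarrow> real \<Rightarrow> real \<Rightarrow> (nat \<Rightarrow> real) \<Rightarrow> nat \<Rightarrow> real" where
  "extend_vec d p c u = (\<lambda>i. if i < d then p * u i else c)"

lemma inner_d_tensor_square_vec:
  "inner_d (d\<^sup>2 + 1) (tensor_square_vec d p c u) (tensor_square_vec d q e v)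
     = p * q * (inner_d d u v)\<^sup>2 + c * e"
proof -
  have "inner_d (d\<^sup>2 + 1) (tensor_square_vec d p c u) (tensor_square_vec d q e v)
      = (\<Sum>i<d * d. (p * u (i div d) * u (i mod d)) * (q * v (i div d) * v (i mod d))) + c * e"
    by (simp add: inner_d_def tensor_square_vec_def power2_eq_square)
  also have "(\<Sum>i<d * d. (p * u (i div d) * u (i mod d)) * (q * v (i div d) * v (i mod d)))
      = (\<Sum>j<d. \<Sum>k<d. (p * u j * u k) * (q * v j * v k))"
    by (rule sum_lessThan_mult_div_mod)
  also have "\<dots> = p * q * ((\<Sum>j<d. u j * v j) * (\<Sum>k<d. u k * v k))"
    by (simp add: sum_product sum_distrib_left algebra_simps)
  finally show ?thesis
    by (simp add: inner_d_def power2_eq_square)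
qed

lemma inner_d_extend_vec:
  "inner_d (d + 1) (extend_vec d p c u) (extend_vec d q e v) = p * q * inner_d d u v + c * e"
  by (simp add: inner_d_def extend_vec_def sum_distrib_left algebra_simps)

lemma unit_d_tensor_square_vec:
  assumes "unit_d d u" and "p\<^sup>2 + c\<^sup>2 = 1"
  shows "unit_d (d\<^sup>2 + 1) (tensor_square_vec d p c u)"
  using assms unfolding unit_d_def inner_d_tensor_square_vec by (simp add: power2_eq_square)

lemma unit_d_extend_vec:
  assumes "unit_d d u" and "p\<^sup>2 + c\<^sup>2 = 1"
  shows "unit_d (d + 1) (extend_vec d p c u)"
  using assms unfolding unit_d_def inner_d_extend_vec by (simp add: power2_eq_square)

lemma inner_d_le_one:
  assumes "unit_d d u" and "unit_d d v"
  shows "inner_d d u v \<le> 1"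
proof -
  have "0 \<le> (\<Sum>i<d. (u i - v i)\<^sup>2)"
    by (simp add: sum_nonneg)
  also have "\<dots> = inner_d d u u + inner_d d v v - 2 * inner_d d u v"
    by (simp add: inner_d_def power2_eq_square algebra_simps sum.distrib sum_subtractf sum_distrib_left)
  finally show ?thesis
    using assms by (simp add: unit_d_def)
qed

lemma realization_of_threshold_embedding:
  assumes "0 \<le> \<delta>0" and "\<delta>0 < \<delta>1" and emb: "threshold_embedding X Y f d \<delta>0 \<delta>1 \<alpha> \<beta>"
  defines "m \<equiv> (\<delta>0 + \<delta>1) / 2"
  defines "a \<equiv> sqrt (1 / (1 + m))" and "b \<equiv> sqrt (m / (1 + m))"
  shows "realization X Y f (d\<^sup>2 + 1) ((\<delta>1 - \<delta>0) / (2 + \<delta>1 + \<delta>0))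
           (\<lambda>x. tensor_square_vec d a b (\<alpha> x)) (\<lambda>y. tensor_square_vec d (- a) b (\<beta> y))"
proof -
  have "0 < m"
    using assms(1,2) by (simp add: m_def)
  then have a2: "a\<^sup>2 = 1 / (1 + m)" and b2: "b\<^sup>2 = m / (1 + m)"
    by (simp_all add: a_def b_def)
  have ab: "a\<^sup>2 + b\<^sup>2 = 1" and ab': "(- a)\<^sup>2 + b\<^sup>2 = 1"
    using \<open>0 < m\<close> by (simp_all add: a2 b2 field_simps)
  have inner: "inner_d (d\<^sup>2 + 1) (tensor_square_vec d a b u) (tensor_square_vec d (- a) b v)
      = (m - (inner_d d u v)\<^sup>2) / (1 + m)" for u v
    unfolding inner_d_tensor_square_vec by (simp add: power2_eq_square[symmetric] a2 b2 diff_divide_distrib)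
  have \<gamma>: "(\<delta>1 - \<delta>0) / (2 + \<delta>1 + \<delta>0) = (m - \<delta>0) / (1 + m)"
      "- ((\<delta>1 - \<delta>0) / (2 + \<delta>1 + \<delta>0)) = (m - \<delta>1) / (1 + m)"
    using \<open>0 < m\<close> assms(1) by (auto simp: m_def field_simps)
  show ?thesis
    unfolding realization_def
  proof (intro conjI ballI impI)
    show "0 < (\<delta>1 - \<delta>0) / (2 + \<delta>1 + \<delta>0)"
      using assms(1,2) by simp
  next
    fix x y assume "x \<in> X" "y \<in> Y" "f x y = Some False"
    then have "(inner_d d (\<alpha> x) (\<beta> y))\<^sup>2 \<le> \<delta>0"
      using emb by (simp add: threshold_embedding_def)
    then show "(\<delta>1 - \<delta>0) / (2 + \<delta>1 + \<delta>0)
        \<le> inner_d (d\<^sup>2 + 1) (tensor_square_vec d a b (\<alpha> x)) (tensor_square_vec d (- a) b (\<beta> y))"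
      unfolding \<gamma>(1) inner using \<open>0 < m\<close> by (simp add: divide_right_mono)
  next
    fix x y assume "x \<in> X" "y \<in> Y" "f x y = Some True"
    then have "\<delta>1 \<le> (inner_d d (\<alpha> x) (\<beta> y))\<^sup>2"
      using emb by (simp add: threshold_embedding_def)
    then show "inner_d (d\<^sup>2 + 1) (tensor_square_vec d a b (\<alpha> x)) (tensor_square_vec d (- a) b (\<beta> y))
        \<le> - ((\<delta>1 - \<delta>0) / (2 + \<delta>1 + \<delta>0))"
      unfolding \<gamma>(2) inner using \<open>0 < m\<close> by (simp add: divide_right_mono)
  qed (rule unit_d_tensor_square_vec; use emb ab ab' in \<open>auto simp: threshold_embedding_def\<close>)+
qed

lemma threshold_embedding_of_realization:
  assumes real: "realization X Y f d \<gamma> \<alpha> \<beta>"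
  defines "s \<equiv> sqrt (1 / 2)"
  shows "threshold_embedding X Y f (d + 1) ((1 - \<gamma>)\<^sup>2 / 4) ((1 + \<gamma>)\<^sup>2 / 4)
           (\<lambda>x. extend_vec d s s (\<alpha> x)) (\<lambda>y. extend_vec d (- s) s (\<beta> y))"
proof -
  have s2: "s\<^sup>2 = 1 / 2"
    by (simp add: s_def)
  have inner: "inner_d (d + 1) (extend_vec d s s u) (extend_vec d (- s) s v) = (1 - inner_d d u v) / 2"
    for u v
    unfolding inner_d_extend_vec by (simp add: power2_eq_square[symmetric] s2 diff_divide_distrib)
  have "0 < \<gamma>"
    using real by (simp add: realization_def)
  show ?thesis
    unfolding threshold_embedding_def
  proof (intro conjI ballI impI)
    fix x y assume xy: "x \<in> X" "y \<in> Y" "f x y = Some False"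
    have "\<gamma> \<le> inner_d d (\<alpha> x) (\<beta> y)"
      using real xy by (simp add: realization_def)
    moreover have "inner_d d (\<alpha> x) (\<beta> y) \<le> 1"
      using real xy by (intro inner_d_le_one) (simp_all add: realization_def)
    ultimately have "(1 - inner_d d (\<alpha> x) (\<beta> y))\<^sup>2 \<le> (1 - \<gamma>)\<^sup>2"
      by - (rule power_mono; linarith)
    then show "\<bar>inner_d (d + 1) (extend_vec d s s (\<alpha> x)) (extend_vec d (- s) s (\<beta> y))\<bar>\<^sup>2
        \<le> (1 - \<gamma>)\<^sup>2 / 4"
      unfolding inner power2_abs power_divide by simp
  next
    fix x y assume "x \<in> X" "y \<in> Y" "f x y = Some True"
    then have "inner_d d (\<alpha> x) (\<beta> y) \<le> - \<gamma>"
      using real by (simp add: realization_def)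
    then have "(1 + \<gamma>)\<^sup>2 \<le> (1 - inner_d d (\<alpha> x) (\<beta> y))\<^sup>2"
      using \<open>0 < \<gamma>\<close> by - (rule power_mono; linarith)
    then show "(1 + \<gamma>)\<^sup>2 / 4
        \<le> \<bar>inner_d (d + 1) (extend_vec d s s (\<alpha> x)) (extend_vec d (- s) s (\<beta> y))\<bar>\<^sup>2"
      unfolding inner power2_abs power_divide by simp
  qed (rule unit_d_extend_vec; use real s2 in \<open>auto simp: realization_def\<close>)+
qed

theorem mainTheorem5:
  fixes X :: "'x set" and Y :: "'y set" and f :: "'x \<Rightarrow> 'y \<Rightarrow> bool option"
  assumes "partial_bool_fun X Y f"
  shows "(\<forall>d \<delta>0 \<delta>1 \<alpha> \<beta>. 0 \<le> \<delta>0 \<and> \<delta>0 < \<delta>1 \<and> threshold_embedding X Y f d \<delta>0 \<delta>1 \<alpha> \<beta> \<longrightarrow>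
            (\<exists>\<alpha>' \<beta>'. realization X Y f (d^2 + 1) ((\<delta>1 - \<delta>0) / (2 + \<delta>1 + \<delta>0)) \<alpha>' \<beta>'))
       \<and> (\<forall>d \<gamma> \<alpha> \<beta>. \<gamma> > 0 \<and> realization X Y f d \<gamma> \<alpha> \<beta> \<longrightarrow>
            (\<exists>\<alpha>' \<beta>'. threshold_embedding X Y f (d + 1) ((1 - \<gamma>)^2 / 4) ((1 + \<gamma>)^2 / 4) \<alpha>' \<beta>'))"
  \<comment> \<open>Both constructions act pointwise on \<open>X \<times> Y\<close>.\<close>
  using realization_of_threshold_embedding threshold_embedding_of_realization by blast

end
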